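(* Let $d,n$ be positive integers with $d+1\le 2^n$, let $0<\kappa_1\le\kappa_2$ be constants, and let $G\subset\mathbb{R}^d$ be a set all of whose points satisfy $\kappa_1\le\|\boldsymbol{x}\|\le\kappa_2$. Let $F:G\to\mathbb{C}^{2^n}$ be the amplitude encoding $$F(\boldsymbol{x})=|\bar{\boldsymbol{x}}\rangle=\gamma^{-1}(x_1,\dots,x_d,\tilde{x},0,\dots,0)^T,\qquad \tilde{x}=\frac{\|\boldsymbol{x}\|}{1+\|\boldsymbol{x}\|},\quad \gamma=(\|\boldsymbol{x}\|^2+\tilde{x}^2)^{1/2},$$ and let $\bar G=F(G)$, a subset of the unit sphere $\mathbb{S}$ of $\mathbb{C}_2^{\otimes n}\cong\mathbb{C}^{2^n}$. Let $\mu$ be a finite Borel measure on $\bar G$ and let $f:\bar G\to\mathbb{R}$ be an arbitrary square-integrable function on $\bar G$. For $n_s\in\mathbb{N}$, $\boldsymbol{z}_1,\dots,\boldsymbol{z}_{n_s}\in\mathbb{S}$, $\boldsymbol{a}\in\mathbb{R}_+^{n_s}$ (positive entries), $\boldsymbol{c}\in[0,1]^{n_s}$ and $\boldsymbol{\alpha}\in\mathbb{R}^{n_s}$ define $$q_{\boldsymbol{z}_1,\dots,\boldsymbol{z}_{n_s},\boldsymbol{a},\boldsymbol{c},\boldsymbol{\alpha}}(\bar{\boldsymbol{x}})=\sum_{j=1}^{n_s}\alpha_j\,\sigma\big(a_j(|\langle\bar{\boldsymbol{x}}|\boldsymbol{z}_j\rangle|^2-c_j)\big),\qquad \sigma(t)=\frac{1}{1+e^{-t}},$$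 and let $Q(\bar G)$ be the set of all such functions (over all choices of $n_s,\boldsymbol{z}_j,\boldsymbol{a},\boldsymbol{c},\boldsymbol{\alpha}$). Then $Q(\bar G)$ is dense in $L^2(\bar G,\mu)$: for every $\epsilon>0$ there exists $q\in Q(\bar G)$ with $$\int_{\bar G}|q(\bar{\boldsymbol{x}})-f(\bar{\boldsymbol{x}})|^2\,d\mu<\epsilon.$$
   Context: $\langle\bar{\boldsymbol{x}}|\boldsymbol{z}\rangle$ denotes the standard Hermitian inner product on $\mathbb{C}^{2^n}$; $\mathbb{S}$ is the set of unit vectors of $\mathbb{C}^{2^n}$. $L^2(\bar G,\mu)$ is the space of real-valued square-integrable functions on $\bar G$ with respect to $\mu$. *)

theory Defs
  imports "HOL-Analysis.Analysis"
begin

text \<open>Vectors of R^d are represented as functions nat => real vanishing at indices >= d;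
vectors of C^(2^n) as functions nat => complex vanishing at indices >= 2^n.\<close>

definition vnorm :: "nat \<Rightarrow> (nat \<Rightarrow> real) \<Rightarrow> real" where
  "vnorm d x = sqrt (\<Sum>i<d. (x i)\<^sup>2)"

definition amp_enc :: "nat \<Rightarrow> (nat \<Rightarrow> real) \<Rightarrow> (nat \<Rightarrow> complex)" where
  "amp_enc d x =
     (let r = vnorm d x; xt = r / (1 + r); \<gamma> = sqrt (r\<^sup>2 + xt\<^sup>2)
      in (\<lambda>i. if i < d then complex_of_real (x i / \<gamma>)
               else if i = d then complex_of_real (xt / \<gamma>) else 0))"

definition hinner :: "nat \<Rightarrow> (nat \<Rightarrow> complex) \<Rightarrow> (nat \<Rightarrow> complex) \<Rightarrow> complex" where
  "hinner N x z = (\<Sum>i<N. cnj (x i) * z i)"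

definition unit_sphere :: "nat \<Rightarrow> (nat \<Rightarrow> complex) set" where
  "unit_sphere N = {z. (\<forall>i\<ge>N. z i = 0) \<and> (\<Sum>i<N. (cmod (z i))\<^sup>2) = 1}"

definition sigmoid :: "real \<Rightarrow> real" where
  "sigmoid t = 1 / (1 + exp (- t))"

definition Qfam :: "nat \<Rightarrow> ((nat \<Rightarrow> complex) \<Rightarrow> real) set" where
  "Qfam N = {q. \<exists>(ns::nat) (zs::nat \<Rightarrow> nat \<Rightarrow> complex) (a::nat \<Rightarrow> real) (c::nat \<Rightarrow> real) (\<alpha>::nat \<Rightarrow> real).
      (\<forall>j<ns. zs j \<in> unit_sphere N \<and> 0 < a j \<and> 0 \<le> c j \<and> c j \<le> 1) \<and>
      q = (\<lambda>x. \<Sum>j<ns. \<alpha> j * sigmoid (a j * ((cmod (hinner N x (zs j)))\<^sup>2 - c j)))}"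

end

theory Submission
  imports Defs
begin

section \<open>Sums of sigmoids on the unit interval\<close>

lemma sigmoid_pos: "0 < sigmoid t"
  unfolding sigmoid_def by (simp add: add_pos_pos)

lemma sigmoid_less_1: "sigmoid t < 1"
  unfolding sigmoid_def by (simp add: add_pos_pos divide_less_eq)

lemma sigmoid_minus: "sigmoid (- t) = 1 - sigmoid t"
proof -
  have "0 < 1 + exp t" by (simp add: add_pos_pos)
  thus ?thesis unfolding sigmoid_def by (simp add: exp_minus field_simps)
qed

lemma sigmoid_le_exp: "sigmoid t \<le> exp t"
proof -
  have "sigmoid t = exp t / (exp t + 1)"
    unfolding sigmoid_def by (simp add: exp_minus field_simps add_pos_pos)
  also have "\<dots> \<le> exp t" by (simp add: divide_le_eq add_pos_pos)
  finally show ?thesis .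
qed

lemma abs_1_minus_2_sigmoid_le:
  assumes "0 \<le> s" shows "\<bar>1 - 2 * sigmoid s\<bar> \<le> s"
proof -
  have "0 < 1 + exp (- s)" by (simp add: add_pos_pos)
  hence "2 * sigmoid s - 1 = (1 - exp (- s)) / (1 + exp (- s))"
    unfolding sigmoid_def by (simp add: field_simps)
  moreover have "0 \<le> (1 - exp (- s)) / (1 + exp (- s))"
    using assms by (simp add: add_pos_pos)
  moreover have "(1 - exp (- s)) / (1 + exp (- s)) \<le> 1 - exp (- s)"
    using assms by (simp add: divide_le_eq add_pos_pos mult_le_cancel_left1)
  moreover have "1 - s \<le> exp (- s)"
    using exp_ge_add_one_self[of "- s"] by simp
  ultimately show ?thesis by linarith
qed

lemma continuous_on_sigmoid [continuous_intros]:
  assumes "continuous_on S f"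
  shows "continuous_on S (\<lambda>x. sigmoid (f x))"
proof -
  have "1 + exp (- f x) \<noteq> 0" for x
    using exp_gt_zero[of "- f x"] by linarith
  thus ?thesis unfolding sigmoid_def using assms by (intro continuous_intros) auto
qed

lemma sigmoid_steep:
  fixes m :: nat and s :: real
  assumes "0 < m" and "1 / m \<le> \<bar>s\<bar>"
  shows "\<bar>(if 0 < s then 1 else 0) - sigmoid (m * (ln m + 1) * s)\<bar> \<le> 1 / m"
proof -
  have "m * (ln m + 1) * \<bar>s\<bar> \<ge> m * (ln m + 1) * (1 / m)"
    using assms by (intro mult_left_mono) auto
  hence steep: "ln m + 1 \<le> m * (ln m + 1) * \<bar>s\<bar>"
    using assms(1) by simp
  have "exp (- (m * (ln m + 1) * \<bar>s\<bar>)) \<le> exp (- (ln m + 1))"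
    using steep by simp
  also have "\<dots> = exp (- 1) / m"
    using assms(1) by (simp add: exp_diff exp_minus field_simps)
  also have "\<dots> \<le> 1 / m"
    by (simp add: divide_right_mono)
  finally have tail: "exp (- (m * (ln m + 1) * \<bar>s\<bar>)) \<le> 1 / m" .
  show ?thesis
  proof (cases "0 < s")
    case True
    have "1 - sigmoid (m * (ln m + 1) * s) \<le> exp (- (m * (ln m + 1) * s))"
      using sigmoid_le_exp[of "- (m * (ln m + 1) * s)"] by (simp add: sigmoid_minus)
    thus ?thesis using True tail sigmoid_less_1[of "m * (ln m + 1) * s"] by simp
  next
    case False
    have "sigmoid (m * (ln m + 1) * s) \<le> exp (- (m * (ln m + 1) * \<bar>s\<bar>))"
      using sigmoid_le_exp[of "m * (ln m + 1) * s"] False by simp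
    thus ?thesis using False tail sigmoid_pos[of "m * (ln m + 1) * s"] by simp
  qed
qed

lemma sum_lessThan_telescope_prefix:
  fixes f :: "nat \<Rightarrow> 'a::ring_1"
  assumes "p \<le> m"
  shows "(\<Sum>j<m. (if j < p then 1 else 0) * (f (Suc j) - f j)) = f p - f 0"
proof -
  have "(\<Sum>j<m. (if j < p then 1 else 0) * (f (Suc j) - f j)) = (\<Sum>j\<in>{..<m} \<inter> {..<p}. f (Suc j) - f j)"
    by (auto simp: sum.inter_restrict intro!: sum.cong)
  also have "{..<m} \<inter> {..<p} = {..<p}"
    using assms by auto
  finally show ?thesis
    by (simp add: sum_lessThan_telescope)
qed

text \<open>The sigmoids \<open>\<sigma>(m (ln m + 1) (t - c\<^sub>j))\<close> with centres \<open>c\<^sub>j = (j + 1/2) / m\<close> approximate the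
  steps of the staircase \<open>j < p\<close>, \<open>p\<close> the grid point nearest to \<open>t\<close>: all but the two steps
  next to \<open>t\<close> are matched up to \<open>1 / m\<close>.\<close>

lemma sigmoid_staircase_error:
  fixes m p :: nat and t :: real
  assumes "0 < m" and p: "\<bar>real p - t * m\<bar> \<le> 1/2"
  shows "(\<Sum>j<m. \<bar>(if j < p then 1 else 0) - sigmoid (m * (ln m + 1) * (t - (j + 1/2) / m))\<bar>) \<le> 3"
proof -
  have m: "real m > 0" using assms(1) by simp
  have p_bounds: "real p - 1/2 \<le> t * m" "t * m \<le> real p + 1/2"
    using p unfolding abs_le_iff by linarith+
  have step: "\<bar>(if j < p then 1 else 0) - sigmoid (m * (ln m + 1) * (t - (j + 1/2) / m))\<bar>
      \<le> 1 / m + (if j = p - 1 then 1 else 0) + (if j = p then 1 else 0)" for j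
  proof (cases "j + 1 = p \<or> j = p")
    case True
    define \<sigma> where "\<sigma> = sigmoid (m * (ln m + 1) * (t - (j + 1/2) / m))"
    define w where "w = 1 / real m"
    have "0 < \<sigma>" "\<sigma> < 1"
      unfolding \<sigma>_def by (rule sigmoid_pos sigmoid_less_1)+
    moreover have "0 \<le> w" unfolding w_def by simp
    ultimately show ?thesis
      using True unfolding \<sigma>_def[symmetric] w_def[symmetric] by auto
  next
    case False
    have "real j + 2 \<le> real p \<or> real p + 1 \<le> real j"
      using False by linarith
    hence "1 \<le> \<bar>t * m - (j + 1/2)\<bar>" "(0 < t * m - (j + 1/2)) = (j < p)"
      using p_bounds by (auto simp: abs_if)
    moreover have "t - (j + 1/2) / m = (t * m - (j + 1/2)) / m"
      using m by (simp add: field_simps)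
    ultimately have "1 / m \<le> \<bar>t - (j + 1/2) / m\<bar>" "(0 < t - (j + 1/2) / m) = (j < p)"
      using m by (simp_all add: divide_right_mono zero_less_divide_iff)
    hence "\<bar>(if j < p then 1 else 0) - sigmoid (m * (ln m + 1) * (t - (j + 1/2) / m))\<bar> \<le> 1 / m"
      using sigmoid_steep[OF assms(1), of "t - (j + 1/2) / m"] by simp
    thus ?thesis by (rule order_trans) simp
  qed
  hence "(\<Sum>j<m. \<bar>(if j < p then 1 else 0) - sigmoid (m * (ln m + 1) * (t - (j + 1/2) / m))\<bar>)
      \<le> (\<Sum>j<m. 1 / m + (if j = p - 1 then 1 else 0) + (if j = p then 1 else 0))"
    by (rule sum_mono)
  also have "\<dots> \<le> 3"
    using m by (simp add: sum.distrib)
  finally show ?thesis .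
qed

lemma sigmoid_staircase_approx:
  fixes g :: "real \<Rightarrow> real" and m :: nat
  assumes "0 < m" and t: "t \<in> {0..1}"
    and modulus: "\<And>s t. s \<in> {0..1} \<Longrightarrow> t \<in> {0..1} \<Longrightarrow> \<bar>s - t\<bar> \<le> 1 / m \<Longrightarrow> \<bar>g s - g t\<bar> \<le> \<eta>"
  shows "\<bar>g t - (g 0 + (\<Sum>j<m. (g ((j + 1) / m) - g (j / m)) *
            sigmoid (m * (ln m + 1) * (t - (j + 1/2) / m))))\<bar> \<le> 4 * \<eta>"
proof -
  define p where "p = nat (round (t * m))"
  define H where "H j = (if j < p then 1 else 0) - sigmoid (m * (ln m + 1) * (t - (j + 1/2) / m))" for j :: nat
  define \<Delta> where "\<Delta> j = g ((j + 1) / m) - g (j / m)" for j :: nat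
  have m: "real m > 0" using assms(1) by simp
  have "\<eta> \<ge> 0" using modulus[OF t t] by simp
  have "0 \<le> round (t * m)" using t by (simp add: round_mono[of 0, simplified])
  hence p_round: "\<bar>real p - t * m\<bar> \<le> 1/2"
    unfolding p_def using of_int_round_abs_le[of "t * m"] by simp
  have "round (t * m) \<le> round (real m)" using t m by (intro round_mono) simp
  hence "p \<le> m" unfolding p_def by simp
  have "\<bar>t - real p / m\<bar> = \<bar>real p - t * m\<bar> / m"
    using m by (simp add: field_simps abs_minus_commute)
  also have "\<dots> \<le> 1 / m" using p_round m by (simp add: divide_right_mono)
  finally have err_round: "\<bar>g t - g (real p / m)\<bar> \<le> \<eta>"
    using modulus t \<open>p \<le> m\<close> m by (simp add: divide_le_eq)
  have steps: "g (real p / m) = g 0 + (\<Sum>j<m. (if j < p then 1 else 0) * \<Delta> j)"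
    using sum_lessThan_telescope_prefix[OF \<open>p \<le> m\<close>, of "\<lambda>j. g (real j / m)"]
    unfolding \<Delta>_def by simp
  have "\<bar>\<Sum>j<m. H j * \<Delta> j\<bar> \<le> (\<Sum>j<m. \<bar>H j\<bar> * \<eta>)"
  proof (rule order_trans[OF sum_abs sum_mono])
    fix j assume "j \<in> {..<m}"
    hence "\<bar>\<Delta> j\<bar> \<le> \<eta>"
      unfolding \<Delta>_def using m by (intro modulus) (auto simp: field_simps)
    thus "\<bar>H j * \<Delta> j\<bar> \<le> \<bar>H j\<bar> * \<eta>"
      unfolding abs_mult by (intro mult_left_mono) auto
  qed
  also have "\<dots> \<le> 3 * \<eta>"
    using sigmoid_staircase_error[OF assms(1) p_round] \<open>\<eta> \<ge> 0\<close>
    unfolding H_def sum_distrib_right[symmetric] by (intro mult_right_mono)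
  finally have err_sigmoid: "\<bar>\<Sum>j<m. H j * \<Delta> j\<bar> \<le> 3 * \<eta>" .
  have "g t - (g 0 + (\<Sum>j<m. \<Delta> j * sigmoid (m * (ln m + 1) * (t - (j + 1/2) / m))))
      = (g t - g (real p / m)) + (\<Sum>j<m. H j * \<Delta> j)"
    unfolding steps H_def by (simp add: sum_subtractf left_diff_distrib algebra_simps)
  thus ?thesis using err_round err_sigmoid unfolding \<Delta>_def by linarith
qed

lemma sigmoid_approx_const:
  fixes r \<eta> :: real
  assumes "0 < \<eta>"
  obtains b where "0 < b" "\<And>t. t \<in> {0..1} \<Longrightarrow> \<bar>r - 2 * r * sigmoid (b * t)\<bar> \<le> \<eta>"
proof
  define b where "b = \<eta> / (\<bar>r\<bar> + 1)"
  show "0 < b" unfolding b_def using assms by (simp add: add_nonneg_pos)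
  fix t :: real assume t: "t \<in> {0..1}"
  have "\<bar>r - 2 * r * sigmoid (b * t)\<bar> = \<bar>r\<bar> * \<bar>1 - 2 * sigmoid (b * t)\<bar>"
    by (simp add: abs_mult[symmetric] algebra_simps)
  also have "\<dots> \<le> \<bar>r\<bar> * b"
  proof (intro mult_left_mono)
    have "0 \<le> b * t" "b * t \<le> b" using t \<open>0 < b\<close> by (auto intro: mult_left_le)
    thus "\<bar>1 - 2 * sigmoid (b * t)\<bar> \<le> b"
      using abs_1_minus_2_sigmoid_le[of "b * t"] by linarith
  qed simp
  also have "\<dots> \<le> \<eta>"
    unfolding b_def using assms by (simp add: field_simps)
  finally show "\<bar>r - 2 * r * sigmoid (b * t)\<bar> \<le> \<eta>" .
qed

lemma sigmoid_sum_approx: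
  fixes g :: "real \<Rightarrow> real"
  assumes g: "continuous_on {0..1} g" and e: "0 < e"
  obtains ns :: nat and a c \<alpha> :: "nat \<Rightarrow> real"
  where "\<forall>j<ns. 0 < a j \<and> 0 \<le> c j \<and> c j \<le> 1"
    and "\<forall>t\<in>{0..1}. \<bar>g t - (\<Sum>j<ns. \<alpha> j * sigmoid (a j * (t - c j)))\<bar> < e"
proof -
  define \<eta> where "\<eta> = e / 8"
  have "\<eta> > 0" unfolding \<eta>_def using e by simp
  obtain \<delta> where "\<delta> > 0" and \<delta>: "\<And>s t. s \<in> {0..1} \<Longrightarrow> t \<in> {0..1} \<Longrightarrow> dist s t < \<delta> \<Longrightarrow> dist (g s) (g t) < \<eta>"
    using compact_uniformly_continuous[OF g] \<open>\<eta> > 0\<close> unfolding uniformly_continuous_on_def by fastforce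
  obtain m :: nat where "0 < m" "1 / m < \<delta>"
    using real_arch_inverse[of \<delta>] \<open>\<delta> > 0\<close> by (auto simp: inverse_eq_divide)
  have modulus: "\<bar>g s - g t\<bar> \<le> \<eta>" if "s \<in> {0..1}" "t \<in> {0..1}" "\<bar>s - t\<bar> \<le> 1 / m" for s t
    using \<delta>[OF that(1,2)] that(3) \<open>1 / m < \<delta>\<close> by (simp add: dist_real_def)
  obtain b where "0 < b" and b: "\<And>t. t \<in> {0..1} \<Longrightarrow> \<bar>g 0 - 2 * g 0 * sigmoid (b * t)\<bar> \<le> \<eta>"
    using sigmoid_approx_const \<open>\<eta> > 0\<close> by blast
  define a where "a j = (if j = 0 then b else m * (ln m + 1))" for j :: nat
  define c where "c j = (if j = 0 then 0 else (real j - 1/2) / m)" for j :: nat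
  define \<alpha> where "\<alpha> j = (if j = 0 then 2 * g 0 else g (real j / m) - g ((real j - 1) / m))" for j :: nat
  show ?thesis
  proof
    have "0 < m * (ln m + 1)" using \<open>0 < m\<close> by (simp add: add_nonneg_pos)
    thus "\<forall>j<Suc m. 0 < a j \<and> 0 \<le> c j \<and> c j \<le> 1"
      using \<open>0 < b\<close> \<open>0 < m\<close> unfolding a_def c_def by (auto simp: divide_le_eq)
    show "\<forall>t\<in>{0..1}. \<bar>g t - (\<Sum>j<Suc m. \<alpha> j * sigmoid (a j * (t - c j)))\<bar> < e"
    proof
      fix t :: real assume t: "t \<in> {0..1}"
      have "(\<Sum>j<Suc m. \<alpha> j * sigmoid (a j * (t - c j))) = 2 * g 0 * sigmoid (b * t) +
          (\<Sum>j<m. (g ((j + 1) / m) - g (j / m)) * sigmoid (m * (ln m + 1) * (t - (j + 1/2) / m)))"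
        unfolding sum.lessThan_Suc_shift by (simp add: a_def c_def \<alpha>_def algebra_simps)
      thus "\<bar>g t - (\<Sum>j<Suc m. \<alpha> j * sigmoid (a j * (t - c j)))\<bar> < e"
        using sigmoid_staircase_approx[where g = g and \<eta> = \<eta>, OF \<open>0 < m\<close> t modulus] b[OF t] \<open>\<eta> > 0\<close>
        unfolding \<eta>_def by linarith
    qed
  qed
qed

section \<open>A polarization identity\<close>

lemma power_add_minus_power:
  fixes x h :: "'a::comm_ring_1"
  shows "(x + h) ^ Suc q - x ^ Suc q = (\<Sum>j\<le>q. of_nat (Suc q choose Suc j) * h ^ Suc j * x ^ (q - j))"
proof -
  have "(x + h) ^ Suc q = (\<Sum>j\<le>Suc q. of_nat (Suc q choose j) * h ^ j * x ^ (Suc q - j))"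
    using binomial_ring[of h x "Suc q"] by (simp add: add.commute)
  also have "\<dots> = x ^ Suc q + (\<Sum>j\<le>q. of_nat (Suc q choose Suc j) * h ^ Suc j * x ^ (q - j))"
    by (subst sum.atMost_Suc_shift) simp
  finally show ?thesis by simp
qed

lemma alternating_sum_Pow_insert:
  fixes h :: "'a set \<Rightarrow> 'b::comm_ring_1"
  assumes "finite A" "a \<notin> A"
  shows "(\<Sum>S\<in>Pow (insert a A). (-1) ^ (card (insert a A) - card S) * h S)
       = (\<Sum>S\<in>Pow A. (-1) ^ (card A - card S) * (h (insert a S) - h S))"
proof -
  have card_le: "card S \<le> card A" if "S \<in> Pow A" for S
    using that assms(1) by (simp add: card_mono)
  have insert_S: "card (insert a S) = Suc (card S)" if "S \<in> Pow A" for S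
    using that assms finite_subset by (auto intro: card_insert_disjoint)
  have "inj_on (insert a) (Pow A)"
    using assms(2) unfolding inj_on_def by (metis PowD insert_ident subsetD)
  moreover have "Pow A \<inter> insert a ` Pow A = {}"
    using assms(2) by auto
  ultimately have "(\<Sum>S\<in>Pow (insert a A). (-1) ^ (card (insert a A) - card S) * h S)
      = (\<Sum>S\<in>Pow A. (-1) ^ (Suc (card A) - card S) * h S)
        + (\<Sum>S\<in>Pow A. (-1) ^ (Suc (card A) - card (insert a S)) * h (insert a S))"
    using assms by (simp add: Pow_insert sum.union_disjoint sum.reindex)
  also have "(\<Sum>S\<in>Pow A. (-1) ^ (Suc (card A) - card S) * h S)
      = - (\<Sum>S\<in>Pow A. (-1) ^ (card A - card S) * h S)"
    unfolding sum_negf[symmetric] by (intro sum.cong refl) (simp add: card_le Suc_diff_le)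
  also have "(\<Sum>S\<in>Pow A. (-1) ^ (Suc (card A) - card (insert a S)) * h (insert a S))
      = (\<Sum>S\<in>Pow A. (-1) ^ (card A - card S) * h (insert a S))"
    by (intro sum.cong refl) (simp add: insert_S)
  also have "- (\<Sum>S\<in>Pow A. (-1) ^ (card A - card S) * h S) + \<dots>
      = (\<Sum>S\<in>Pow A. (-1) ^ (card A - card S) * (h (insert a S) - h S))"
    by (simp add: sum_subtractf right_diff_distrib)
  finally show ?thesis .
qed

text \<open>With \<open>c = 0\<close> and \<open>p = card A\<close> this is the polarization identity expressing a product of
  \<open>p\<close> numbers as a combination of \<open>p\<close>-th powers of their partial sums.\<close>

lemma alternating_sum_Pow_power:
  fixes y :: "'a \<Rightarrow> 'b::comm_ring_1"
  assumes "finite A" "p \<le> card A"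
  shows "(\<Sum>S\<in>Pow A. (-1) ^ (card A - card S) * (c + sum y S) ^ p)
       = (if p = card A then of_nat (fact p) * prod y A else 0)"
  using assms
proof (induction A arbitrary: c p rule: finite_induct)
  case empty
  thus ?case by simp
next
  case (insert a A)
  define D where "D c r = (\<Sum>S\<in>Pow A. (-1) ^ (card A - card S) * (c + sum y S) ^ r)" for c r
  have sum_insert: "sum y (insert a S) = y a + sum y S" if "S \<in> Pow A" for S
    using that insert.hyps finite_subset by (auto intro: sum.insert)
  show ?case
  proof (cases p)
    case 0
    thus ?thesis using alternating_sum_Pow_insert[OF insert.hyps, of "\<lambda>_. 1"] insert.hyps by simp
  next
    case (Suc q)
    have "q \<le> card A" using insert Suc by simp
    have "(\<Sum>S\<in>Pow (insert a A). (-1) ^ (card (insert a A) - card S) * (c + sum y S) ^ p)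
        = (\<Sum>S\<in>Pow A. (-1) ^ (card A - card S) *
             (\<Sum>j\<le>q. of_nat (Suc q choose Suc j) * y a ^ Suc j * (c + sum y S) ^ (q - j)))"
      unfolding alternating_sum_Pow_insert[OF insert.hyps] Suc
      using power_add_minus_power[of "c + sum y _" "y a" q]
      by (intro sum.cong refl) (simp add: sum_insert algebra_simps)
    also have "\<dots> = (\<Sum>j\<le>q. of_nat (Suc q choose Suc j) * y a ^ Suc j * D c (q - j))"
      unfolding D_def sum_distrib_left by (subst sum.swap) (simp add: algebra_simps)
    also have "\<dots> = (\<Sum>j\<le>q. if j = 0 \<and> q = card A then of_nat (Suc q) * y a * (of_nat (fact q) * prod y A) else 0)"
      using \<open>q \<le> card A\<close> insert.IH unfolding D_def by (intro sum.cong refl) auto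
    also have "\<dots> = (if p = card (insert a A) then of_nat (fact p) * prod y (insert a A) else 0)"
      using insert.hyps Suc by (simp add: algebra_simps)
    finally show ?thesis .
  qed
qed

section \<open>Uniform closures of function spaces\<close>

locale function_subspace =
  fixes Q :: "('a \<Rightarrow> real) set"
  assumes zero_mem: "(\<lambda>x. 0) \<in> Q"
    and add_mem: "p \<in> Q \<Longrightarrow> q \<in> Q \<Longrightarrow> (\<lambda>x. p x + q x) \<in> Q"
    and scale_mem: "q \<in> Q \<Longrightarrow> (\<lambda>x. r * q x) \<in> Q"
begin

lemma sum_mem: "finite I \<Longrightarrow> (\<And>i. i \<in> I \<Longrightarrow> q i \<in> Q) \<Longrightarrow> (\<lambda>x. \<Sum>i\<in>I. q i x) \<in> Q"
  by (induction I rule: finite_induct) (auto intro: zero_mem add_mem)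

end

definition uniform_closure_on :: "'a set \<Rightarrow> ('a \<Rightarrow> real) set \<Rightarrow> ('a \<Rightarrow> real) set" where
  "uniform_closure_on K Q = {f. \<forall>e>0. \<exists>q\<in>Q. \<forall>x\<in>K. \<bar>f x - q x\<bar> < e}"

lemma uniform_closure_onD:
  "f \<in> uniform_closure_on K Q \<Longrightarrow> 0 < e \<Longrightarrow> \<exists>q\<in>Q. \<forall>x\<in>K. \<bar>f x - q x\<bar> < e"
  unfolding uniform_closure_on_def by blast

lemma uniform_closure_on_limit:
  assumes "\<And>e. 0 < e \<Longrightarrow> \<exists>g\<in>uniform_closure_on K Q. \<forall>x\<in>K. \<bar>f x - g x\<bar> < e"
  shows "f \<in> uniform_closure_on K Q"
  unfolding uniform_closure_on_def
proof (intro CollectI allI impI)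
  fix e :: real assume "0 < e"
  then obtain g where "g \<in> uniform_closure_on K Q" and fg: "\<forall>x\<in>K. \<bar>f x - g x\<bar> < e / 2"
    using assms[of "e / 2"] by auto
  then obtain q where "q \<in> Q" and gq: "\<forall>x\<in>K. \<bar>g x - q x\<bar> < e / 2"
    using \<open>0 < e\<close> by (auto dest: uniform_closure_onD[of _ _ _ "e / 2"])
  have "\<bar>f x - q x\<bar> < e" if "x \<in> K" for x
    using fg gq that unfolding abs_less_iff by force
  thus "\<exists>q\<in>Q. \<forall>x\<in>K. \<bar>f x - q x\<bar> < e" using \<open>q \<in> Q\<close> by blast
qed

lemma uniform_closure_on_cong:
  "f \<in> uniform_closure_on K Q \<Longrightarrow> (\<And>x. x \<in> K \<Longrightarrow> f x = g x) \<Longrightarrow> g \<in> uniform_closure_on K Q"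
  unfolding uniform_closure_on_def by auto

lemma uniform_closure_on_subset:
  "K' \<subseteq> K \<Longrightarrow> uniform_closure_on K Q \<subseteq> uniform_closure_on K' Q"
  unfolding uniform_closure_on_def by blast

lemma (in function_subspace) uniform_closure_on_add:
  assumes f: "f \<in> uniform_closure_on K Q" and g: "g \<in> uniform_closure_on K Q"
  shows "(\<lambda>x. f x + g x) \<in> uniform_closure_on K Q"
  unfolding uniform_closure_on_def
proof (intro CollectI allI impI)
  fix e :: real assume "0 < e"
  then obtain p q where "p \<in> Q" "q \<in> Q" "\<forall>x\<in>K. \<bar>f x - p x\<bar> < e / 2" "\<forall>x\<in>K. \<bar>g x - q x\<bar> < e / 2"
    using uniform_closure_onD[OF f, of "e / 2"] uniform_closure_onD[OF g, of "e / 2"] by auto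
  thus "\<exists>q\<in>Q. \<forall>x\<in>K. \<bar>f x + g x - q x\<bar> < e"
    unfolding abs_less_iff by (intro bexI[of _ "\<lambda>x. p x + q x"] add_mem) force+
qed

lemma (in function_subspace) uniform_closure_on_scale:
  assumes f: "f \<in> uniform_closure_on K Q"
  shows "(\<lambda>x. r * f x) \<in> uniform_closure_on K Q"
  unfolding uniform_closure_on_def
proof (intro CollectI allI impI)
  fix e :: real assume "0 < e"
  hence "0 < e / (\<bar>r\<bar> + 1)" by (simp add: add_nonneg_pos)
  then obtain q where "q \<in> Q" and q: "\<forall>x\<in>K. \<bar>f x - q x\<bar> < e / (\<bar>r\<bar> + 1)"
    using uniform_closure_onD[OF f] by blast
  have "\<bar>r * f x - r * q x\<bar> < e" if "x \<in> K" for x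
  proof -
    have "\<bar>r * f x - r * q x\<bar> = \<bar>r\<bar> * \<bar>f x - q x\<bar>"
      by (simp add: abs_mult[symmetric] right_diff_distrib)
    also have "\<dots> \<le> (\<bar>r\<bar> + 1) * \<bar>f x - q x\<bar>"
      by (simp add: mult_right_mono)
    also have "\<dots> < e"
      using q that by (simp add: pos_less_divide_eq add_nonneg_pos mult.commute)
    finally show ?thesis .
  qed
  thus "\<exists>q\<in>Q. \<forall>x\<in>K. \<bar>r * f x - q x\<bar> < e"
    using \<open>q \<in> Q\<close> by (intro bexI[of _ "\<lambda>x. r * q x"] scale_mem) auto
qed

lemma (in function_subspace) function_subspace_uniform_closure_on:
  "function_subspace (uniform_closure_on K Q)"
proof
  show "(\<lambda>x. 0) \<in> uniform_closure_on K Q"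
    unfolding uniform_closure_on_def using zero_mem by force
qed (fact uniform_closure_on_add uniform_closure_on_scale)+

section \<open>Density in \<open>L\<^sup>2\<close>\<close>

definition square_integrable :: "'a measure \<Rightarrow> ('a \<Rightarrow> real) \<Rightarrow> bool" where
  "square_integrable M f \<longleftrightarrow> f \<in> borel_measurable M \<and> integrable M (\<lambda>x. (f x)\<^sup>2)"

lemma power2_add_le: "(u + v)\<^sup>2 \<le> 2 * u\<^sup>2 + 2 * (v::real)\<^sup>2"
  using sum_squares_bound[of u v] by (simp add: power2_sum)

lemma square_integrable_add:
  assumes "square_integrable M u" "square_integrable M v"
  shows "square_integrable M (\<lambda>x. u x + v x)"
  unfolding square_integrable_def
proof
  have [measurable]: "u \<in> borel_measurable M" "v \<in> borel_measurable M"
    using assms unfolding square_integrable_def by auto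
  show "(\<lambda>x. u x + v x) \<in> borel_measurable M"
    by measurable
  show "integrable M (\<lambda>x. (u x + v x)\<^sup>2)"
  proof (rule Bochner_Integration.integrable_bound)
    show "integrable M (\<lambda>x. 2 * (u x)\<^sup>2 + 2 * (v x)\<^sup>2)"
      using assms unfolding square_integrable_def by simp
    show "(\<lambda>x. (u x + v x)\<^sup>2) \<in> borel_measurable M"
      by measurable
    show "AE x in M. norm ((u x + v x)\<^sup>2) \<le> norm (2 * (u x)\<^sup>2 + 2 * (v x)\<^sup>2)"
      using power2_add_le by (intro AE_I2) simp
  qed
qed

lemma square_integrable_scale:
  "square_integrable M u \<Longrightarrow> square_integrable M (\<lambda>x. r * u x)"
  unfolding square_integrable_def by (simp add: power_mult_distrib borel_measurable_times)

lemma square_integrable_diff: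
  "square_integrable M u \<Longrightarrow> square_integrable M v \<Longrightarrow> square_integrable M (\<lambda>x. u x - v x)"
  using square_integrable_add[of M u "\<lambda>x. (-1) * v x"] square_integrable_scale[of M v "-1"] by simp

lemma integral_power2_add_le:
  assumes "square_integrable M u" "square_integrable M v"
  shows "(\<integral>x. (u x + v x)\<^sup>2 \<partial>M) \<le> 2 * (\<integral>x. (u x)\<^sup>2 \<partial>M) + 2 * (\<integral>x. (v x)\<^sup>2 \<partial>M)"
proof -
  have "(\<integral>x. (u x + v x)\<^sup>2 \<partial>M) \<le> (\<integral>x. 2 * (u x)\<^sup>2 + 2 * (v x)\<^sup>2 \<partial>M)"
    using assms square_integrable_add[OF assms] power2_add_le unfolding square_integrable_def
    by (intro integral_mono) simp_all
  thus ?thesis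
    using assms unfolding square_integrable_def by simp
qed

lemma (in finite_measure) square_integrable_bounded:
  assumes "f \<in> borel_measurable M" "\<And>x. x \<in> space M \<Longrightarrow> \<bar>f x\<bar> \<le> B"
  shows "square_integrable M f"
  unfolding square_integrable_def
proof
  have "(f x)\<^sup>2 \<le> B\<^sup>2" if "x \<in> space M" for x
    using power_mono[OF assms(2)[OF that], of 2] by simp
  thus "integrable M (\<lambda>x. (f x)\<^sup>2)"
    using assms(1) by (intro integrable_const_bound[where B = "B\<^sup>2"]) auto
qed (fact assms(1))

lemma simple_function_L2_approx:
  fixes f :: "'a \<Rightarrow> real"
  assumes f: "square_integrable M f" and "0 < e"
  obtains s where "simple_function M s" "(\<integral>x. (s x - f x)\<^sup>2 \<partial>M) < e"
proof -
  have f_borel [measurable]: "f \<in> borel_measurable M" and f2: "integrable M (\<lambda>x. (f x)\<^sup>2)"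
    using f unfolding square_integrable_def by auto
  obtain F where F: "\<forall>i. simple_function M (F i)" "\<forall>x\<in>space M. (\<lambda>i. F i x) \<longlonglongrightarrow> f x"
    "\<forall>i. \<forall>x\<in>space M. dist (F i x) 0 \<le> 2 * dist (f x) 0"
    using borel_measurable_implies_sequence_metric[OF f_borel, where z = 0] by blast
  have [measurable]: "F i \<in> borel_measurable M" for i
    using F(1) by (simp add: borel_measurable_simple_function)
  have "(\<lambda>i. \<integral>x. (F i x - f x)\<^sup>2 \<partial>M) \<longlonglongrightarrow> (\<integral>x. 0 \<partial>M)"
  proof (rule integral_dominated_convergence[where w = "\<lambda>x. 9 * (f x)\<^sup>2"])
    show "AE x in M. (\<lambda>i. (F i x - f x)\<^sup>2) \<longlonglongrightarrow> 0"
    proof (rule AE_I2)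
      fix x assume "x \<in> space M"
      hence "(\<lambda>i. F i x - f x) \<longlonglongrightarrow> 0"
        using F(2) by (intro LIM_zero) blast
      thus "(\<lambda>i. (F i x - f x)\<^sup>2) \<longlonglongrightarrow> 0"
        using tendsto_power[of "\<lambda>i. F i x - f x" 0 sequentially 2] by simp
    qed
    show "AE x in M. norm ((F i x - f x)\<^sup>2) \<le> 9 * (f x)\<^sup>2" for i
    proof (rule AE_I2)
      fix x assume "x \<in> space M"
      hence "\<bar>F i x\<bar> \<le> 2 * \<bar>f x\<bar>"
        using F(3) by (simp add: dist_real_def)
      hence "\<bar>F i x - f x\<bar> \<le> 3 * \<bar>f x\<bar>"
        using abs_triangle_ineq4[of "F i x" "f x"] by linarith
      thus "norm ((F i x - f x)\<^sup>2) \<le> 9 * (f x)\<^sup>2"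
        using power_mono[of "\<bar>F i x - f x\<bar>" "3 * \<bar>f x\<bar>" 2] by (simp add: power_mult_distrib)
    qed
  qed (use f2 in simp_all)
  hence "\<forall>\<^sub>F i in sequentially. (\<integral>x. (F i x - f x)\<^sup>2 \<partial>M) < e"
    using \<open>0 < e\<close> by (intro order_tendstoD(2)) simp_all
  then obtain i where "(\<integral>x. (F i x - f x)\<^sup>2 \<partial>M) < e"
    by (auto simp: eventually_sequentially)
  thus ?thesis using F(1) by (intro that[of "F i"]) auto
qed

lemma compact_open_measure_approx:
  fixes M :: "'a::{second_countable_topology, complete_space} measure"
  assumes "finite_measure M" "sets M = sets borel" "B \<in> sets borel" "0 < e"
  obtains C U where "compact C" "C \<subseteq> B" "open U" "B \<subseteq> U" "measure M (U - C) < e"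
proof -
  interpret finite_measure M by (fact assms(1))
  have fin: "emeasure M (space M) \<noteq> \<infinity>" by simp
  have "ennreal (measure M B) < ennreal (measure M B + e / 2)"
    using assms(4) by (simp add: ennreal_lessI)
  hence "(INF U \<in> {U. B \<subseteq> U \<and> open U}. emeasure M U) < ennreal (measure M B + e / 2)"
    using outer_regular[OF assms(2) fin assms(3)] by (simp add: emeasure_eq_measure)
  then obtain U where U: "B \<subseteq> U" "open U" "measure M U < measure M B + e / 2"
    by (auto simp: INF_less_iff emeasure_eq_measure ennreal_less_iff)
  obtain C where C: "C \<subseteq> B" "compact C" "measure M B - e / 2 < measure M C"
  proof (cases "measure M B < e / 2")
    case True
    thus ?thesis by (intro that[of "{}"]) auto
  next
    case False
    hence "ennreal (measure M B - e / 2) < ennreal (measure M B)"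
      using assms(4) by (intro ennreal_lessI) auto
    also have "\<dots> = (SUP K \<in> {K. K \<subseteq> B \<and> compact K}. emeasure M K)"
      using inner_regular[OF assms(2) fin assms(3)] by (simp add: emeasure_eq_measure)
    finally show ?thesis
      using False by (auto simp: less_SUP_iff emeasure_eq_measure ennreal_less_iff intro: that)
  qed
  have "measure M (U - C) = measure M U - measure M C"
    using U C assms(2) by (intro measure_Diff) (auto intro: borel_closed compact_imp_closed)
  thus ?thesis
    using U C by (intro that[of C U]) auto
qed

lemma Urysohn_metric:
  fixes C U :: "'a::metric_space set"
  assumes "closed C" "open U" "C \<subseteq> U"
  obtains \<phi> :: "'a \<Rightarrow> real" where "continuous_on UNIV \<phi>" "\<And>x. \<phi> x \<in> {0..1}"
    "\<And>x. x \<in> C \<Longrightarrow> \<phi> x = 1" "\<And>x. x \<notin> U \<Longrightarrow> \<phi> x = 0"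
proof -
  obtain \<phi> :: "'a \<Rightarrow> real" where \<phi>: "continuous_map euclidean (top_of_set {0..1}) \<phi>"
    "\<phi> ` (- U) \<subseteq> {0}" "\<phi> ` C \<subseteq> {1}"
  proof (rule Urysohn_lemma[OF metrizable_imp_normal_space[OF metrizable_space_euclidean], of "- U" C 0 1])
    show "closedin euclidean (- U)" "closedin euclidean C"
      using assms(1,2) by (simp_all add: closed_closedin[symmetric] closed_Compl)
    show "disjnt (- U) C"
      using assms(3) by (auto simp: disjnt_def)
  qed (simp, blast)
  show ?thesis
  proof
    show "continuous_on UNIV \<phi>"
      using continuous_map_into_fulltopology[OF \<phi>(1)] by simp
    show "\<phi> x \<in> {0..1}" for x
      using continuous_map_image_subset_topspace[OF \<phi>(1)] by (simp add: image_subset_iff)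
    show "\<phi> x = 1" if "x \<in> C" for x
      using \<phi>(3) that by blast
    show "\<phi> x = 0" if "x \<notin> U" for x
      using \<phi>(2) that by blast
  qed
qed

lemma power2_diff_indicator_le:
  fixes \<phi> :: "'a \<Rightarrow> real"
  assumes "\<phi> x \<in> {0..1}" "x \<in> C \<Longrightarrow> \<phi> x = 1 \<and> x \<in> A" "x \<notin> U \<Longrightarrow> \<phi> x = 0 \<and> x \<notin> A"
  shows "(\<phi> x - indicator A x)\<^sup>2 \<le> indicator (U - C) x"
proof (cases "x \<in> U - C")
  case True
  have "\<bar>\<phi> x - indicator A x\<bar> \<le> 1" using assms(1) by (auto simp: indicator_def)
  thus ?thesis using True power_mono[of "\<bar>\<phi> x - indicator A x\<bar>" 1 2] by simp
qed (use assms in \<open>auto simp: indicator_def\<close>)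

locale L2_uniform_density = finite_measure M + function_subspace Q
  for M :: "'a::polish_space measure" and Q :: "('a \<Rightarrow> real) set" +
  fixes S :: "'a set"
  assumes sets_M: "sets M = sets (restrict_space borel S)"
    and borel_Q: "q \<in> Q \<Longrightarrow> q \<in> borel_measurable borel"
    and bounded_Q: "q \<in> Q \<Longrightarrow> \<exists>B. \<forall>x. \<bar>q x\<bar> \<le> B"
    and continuous_approx: "continuous_on UNIV \<phi> \<Longrightarrow> bounded (range \<phi>) \<Longrightarrow> \<phi> \<in> uniform_closure_on S Q"
begin

lemma space_M: "space M = S"
  using sets_eq_imp_space_eq[OF sets_M] by (simp add: space_restrict_space)

lemma borel_measurable_M: "h \<in> borel_measurable borel \<Longrightarrow> h \<in> borel_measurable M"
  using measurable_restrict_space1[of h borel borel S] measurable_cong_sets[OF sets_M refl] by blast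

lemma square_integrable_Q: "q \<in> Q \<Longrightarrow> square_integrable M q"
  using bounded_Q borel_Q borel_measurable_M square_integrable_bounded by metis

definition L2_approximable :: "('a \<Rightarrow> real) \<Rightarrow> bool" where
  "L2_approximable f \<longleftrightarrow> square_integrable M f \<and> (\<forall>e>0. \<exists>q\<in>Q. (\<integral>x. (q x - f x)\<^sup>2 \<partial>M) < e)"

lemma L2_approximableD:
  "L2_approximable f \<Longrightarrow> 0 < e \<Longrightarrow> \<exists>q\<in>Q. (\<integral>x. (q x - f x)\<^sup>2 \<partial>M) < e"
  unfolding L2_approximable_def by blast

lemma integral_power2_diff_le:
  assumes "square_integrable M u" "square_integrable M v" "square_integrable M w"
  shows "(\<integral>x. (u x - w x)\<^sup>2 \<partial>M) \<le> 2 * (\<integral>x. (u x - v x)\<^sup>2 \<partial>M) + 2 * (\<integral>x. (v x - w x)\<^sup>2 \<partial>M)"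
  using integral_power2_add_le[OF square_integrable_diff[OF assms(1,2)] square_integrable_diff[OF assms(2,3)]]
  by simp

lemma L2_approximable_limit:
  assumes f: "square_integrable M f"
    and approx: "\<And>e. 0 < e \<Longrightarrow> \<exists>g. L2_approximable g \<and> (\<integral>x. (g x - f x)\<^sup>2 \<partial>M) < e"
  shows "L2_approximable f"
  unfolding L2_approximable_def
proof (intro conjI allI impI f)
  fix e :: real assume "0 < e"
  then obtain g where g: "L2_approximable g" "(\<integral>x. (g x - f x)\<^sup>2 \<partial>M) < e / 4"
    using approx[of "e / 4"] by auto
  then obtain q where "q \<in> Q" "(\<integral>x. (q x - g x)\<^sup>2 \<partial>M) < e / 4"
    using L2_approximableD[of g "e / 4"] \<open>0 < e\<close> by auto
  moreover have "(\<integral>x. (q x - f x)\<^sup>2 \<partial>M) \<le> 2 * (\<integral>x. (q x - g x)\<^sup>2 \<partial>M) + 2 * (\<integral>x. (g x - f x)\<^sup>2 \<partial>M)"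
    using square_integrable_Q[OF \<open>q \<in> Q\<close>] g(1) f unfolding L2_approximable_def
    by (intro integral_power2_diff_le) auto
  ultimately show "\<exists>q\<in>Q. (\<integral>x. (q x - f x)\<^sup>2 \<partial>M) < e"
    using g(2) by (intro bexI[of _ q]) auto
qed

lemma L2_approximable_add:
  assumes f: "L2_approximable f" and g: "L2_approximable g"
  shows "L2_approximable (\<lambda>x. f x + g x)"
  unfolding L2_approximable_def
proof (intro conjI allI impI)
  show "square_integrable M (\<lambda>x. f x + g x)"
    using f g unfolding L2_approximable_def by (auto intro: square_integrable_add)
  fix e :: real assume "0 < e"
  then obtain p q where "p \<in> Q" "q \<in> Q"
    and pq: "(\<integral>x. (p x - f x)\<^sup>2 \<partial>M) < e / 4" "(\<integral>x. (q x - g x)\<^sup>2 \<partial>M) < e / 4"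
    using L2_approximableD[OF f, of "e / 4"] L2_approximableD[OF g, of "e / 4"] by auto
  have "(\<integral>x. ((p x + q x) - (f x + g x))\<^sup>2 \<partial>M) = (\<integral>x. ((p x - f x) + (q x - g x))\<^sup>2 \<partial>M)"
    by (simp add: algebra_simps)
  also have "\<dots> \<le> 2 * (\<integral>x. (p x - f x)\<^sup>2 \<partial>M) + 2 * (\<integral>x. (q x - g x)\<^sup>2 \<partial>M)"
    using f g square_integrable_Q[OF \<open>p \<in> Q\<close>] square_integrable_Q[OF \<open>q \<in> Q\<close>]
    unfolding L2_approximable_def by (intro integral_power2_add_le square_integrable_diff) auto
  also have "\<dots> < e" using pq by simp
  finally show "\<exists>q\<in>Q. (\<integral>x. (q x - (f x + g x))\<^sup>2 \<partial>M) < e"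
    using add_mem[OF \<open>p \<in> Q\<close> \<open>q \<in> Q\<close>] by (intro bexI[of _ "\<lambda>x. p x + q x"])
qed

lemma L2_approximable_scale:
  assumes f: "L2_approximable f"
  shows "L2_approximable (\<lambda>x. r * f x)"
  unfolding L2_approximable_def
proof (intro conjI allI impI)
  show "square_integrable M (\<lambda>x. r * f x)"
    using f unfolding L2_approximable_def by (auto intro: square_integrable_scale)
  fix e :: real assume "0 < e"
  hence "0 < e / (r\<^sup>2 + 1)" by (simp add: add_nonneg_pos)
  then obtain q where "q \<in> Q" and q: "(\<integral>x. (q x - f x)\<^sup>2 \<partial>M) < e / (r\<^sup>2 + 1)"
    using L2_approximableD[OF f] by blast
  have "(\<integral>x. (r * q x - r * f x)\<^sup>2 \<partial>M) = r\<^sup>2 * (\<integral>x. (q x - f x)\<^sup>2 \<partial>M)"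
    by (simp add: power_mult_distrib right_diff_distrib[symmetric])
  also have "\<dots> \<le> (r\<^sup>2 + 1) * (\<integral>x. (q x - f x)\<^sup>2 \<partial>M)"
    by (intro mult_right_mono) auto
  also have "\<dots> < e"
    using q by (simp add: pos_less_divide_eq add_nonneg_pos mult.commute)
  finally show "\<exists>q\<in>Q. (\<integral>x. (q x - r * f x)\<^sup>2 \<partial>M) < e"
    using scale_mem[OF \<open>q \<in> Q\<close>, of r] by (intro bexI[of _ "\<lambda>x. r * q x"])
qed

lemma function_subspace_L2_approximable: "function_subspace (Collect L2_approximable)"
proof
  show "(\<lambda>x. 0) \<in> Collect L2_approximable"
    using zero_mem square_integrable_Q unfolding L2_approximable_def by force
qed (simp_all add: L2_approximable_add L2_approximable_scale)

lemma L2_approximable_cong: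
  assumes "L2_approximable f" "\<And>x. x \<in> space M \<Longrightarrow> f x = g x"
  shows "L2_approximable g"
proof -
  have "integrable M (\<lambda>x. (g x)\<^sup>2) = integrable M (\<lambda>x. (f x)\<^sup>2)"
    by (rule Bochner_Integration.integrable_cong) (simp_all add: assms(2))
  hence "square_integrable M g"
    using assms(1) unfolding L2_approximable_def square_integrable_def
    by (auto simp: assms(2) cong: measurable_cong)
  moreover have "(\<integral>x. (q x - g x)\<^sup>2 \<partial>M) = (\<integral>x. (q x - f x)\<^sup>2 \<partial>M)" for q
    using assms(2) by (intro Bochner_Integration.integral_cong) auto
  ultimately show ?thesis
    using assms(1) unfolding L2_approximable_def by simp
qed

lemma L2_approximable_uniform:
  assumes f: "square_integrable M f" "f \<in> uniform_closure_on S Q"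
  shows "L2_approximable f"
  unfolding L2_approximable_def
proof (intro conjI allI impI f(1))
  fix e :: real assume "0 < e"
  define m where "m = measure M (space M)"
  define \<eta> where "\<eta> = sqrt (e / (m + 1))"
  have "0 \<le> m" unfolding m_def by simp
  hence "0 < \<eta>" "\<eta>\<^sup>2 * (m + 1) = e" unfolding \<eta>_def using \<open>0 < e\<close> by simp_all
  then obtain q where "q \<in> Q" and q: "\<forall>x\<in>S. \<bar>f x - q x\<bar> < \<eta>"
    using uniform_closure_onD[OF f(2)] by blast
  have "(\<integral>x. (q x - f x)\<^sup>2 \<partial>M) \<le> (\<integral>x. \<eta>\<^sup>2 \<partial>M)"
  proof (rule integral_mono)
    show "integrable M (\<lambda>x. (q x - f x)\<^sup>2)"
      using square_integrable_diff[OF square_integrable_Q[OF \<open>q \<in> Q\<close>] f(1)]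
      unfolding square_integrable_def by simp
    fix x assume "x \<in> space M"
    hence "\<bar>q x - f x\<bar> \<le> \<eta>" using q space_M by (simp add: abs_minus_commute less_imp_le)
    thus "(q x - f x)\<^sup>2 \<le> \<eta>\<^sup>2" using power_mono[of "\<bar>q x - f x\<bar>" \<eta> 2] by simp
  qed simp
  also have "\<dots> = \<eta>\<^sup>2 * m" unfolding m_def by simp
  also have "\<dots> < \<eta>\<^sup>2 * (m + 1)"
    using \<open>0 < \<eta>\<close> by simp
  finally show "\<exists>q\<in>Q. (\<integral>x. (q x - f x)\<^sup>2 \<partial>M) < e"
    using \<open>q \<in> Q\<close> \<open>\<eta>\<^sup>2 * (m + 1) = e\<close> by auto
qed

lemma compact_open_approx_sets_M:
  assumes "A \<in> sets M" "0 < e"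
  obtains C U where "compact C" "open U" "C \<subseteq> U" "C \<inter> S \<subseteq> A" "A \<subseteq> U"
    "(U - C) \<inter> S \<in> sets M" "measure M ((U - C) \<inter> S) < e"
proof -
  obtain B where B: "B \<in> sets borel" "A = S \<inter> B"
    using assms(1) sets_M by (auto simp: sets_restrict_space)
  have id_measurable: "(\<lambda>x. x) \<in> measurable M borel"
    using borel_measurable_M[of "\<lambda>x. x"] by simp
  define \<nu> where "\<nu> = distr M borel (\<lambda>x. x)"
  have "finite_measure \<nu>" "sets \<nu> = sets borel"
    unfolding \<nu>_def using finite_measure_distr[OF id_measurable] by simp_all
  then obtain C U where CU: "compact C" "C \<subseteq> B" "open U" "B \<subseteq> U" "measure \<nu> (U - C) < e"
    by (rule compact_open_measure_approx[OF _ _ B(1) assms(2)])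
  have "U - C \<in> sets borel"
    using CU(1,3) by (intro sets.Diff borel_open borel_closed compact_imp_closed)
  moreover have "measure M ((U - C) \<inter> S) = measure \<nu> (U - C)"
    unfolding \<nu>_def measure_distr[OF id_measurable \<open>U - C \<in> sets borel\<close>] space_M by simp
  ultimately show ?thesis
    using CU B(2) sets_M by (intro that[of C U]) (auto simp: sets_restrict_space)
qed

lemma L2_approximable_indicator:
  assumes A: "A \<in> sets M"
  shows "L2_approximable (indicator A)"
proof (rule L2_approximable_limit)
  show A_si: "square_integrable M (indicator A)"
    using A by (intro square_integrable_bounded[where B = 1]) (auto simp: indicator_def)
  fix e :: real assume "0 < e"
  obtain C U where CU: "compact C" "open U" "C \<subseteq> U" "C \<inter> S \<subseteq> A" "A \<subseteq> U"
    and D: "(U - C) \<inter> S \<in> sets M" "measure M ((U - C) \<inter> S) < e"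
    by (rule compact_open_approx_sets_M[OF A \<open>0 < e\<close>])
  obtain \<phi> :: "'a \<Rightarrow> real" where \<phi>: "continuous_on UNIV \<phi>" "\<And>x. \<phi> x \<in> {0..1}"
    "\<And>x. x \<in> C \<Longrightarrow> \<phi> x = 1" "\<And>x. x \<notin> U \<Longrightarrow> \<phi> x = 0"
  proof (rule Urysohn_metric[OF compact_imp_closed[OF CU(1)] CU(2,3)])
    fix \<psi> :: "'a \<Rightarrow> real"
    assume "continuous_on UNIV \<psi>" "\<And>x. \<psi> x \<in> {0..1}" "\<And>x. x \<in> C \<Longrightarrow> \<psi> x = 1" "\<And>x. x \<notin> U \<Longrightarrow> \<psi> x = 0"
    thus thesis by (rule that)
  qed
  have \<phi>_le_1: "\<bar>\<phi> x\<bar> \<le> 1" for x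
    using \<phi>(2)[of x] by auto
  have \<phi>_si: "square_integrable M \<phi>"
    using \<phi>(1) \<phi>_le_1
    by (intro square_integrable_bounded[where B = 1] borel_measurable_M borel_measurable_continuous_onI)
  have "bounded (range \<phi>)"
    using \<phi>_le_1 by (intro boundedI[where B = 1]) auto
  hence L2_\<phi>: "L2_approximable \<phi>"
    by (rule L2_approximable_uniform[OF \<phi>_si continuous_approx[OF \<phi>(1)]])
  have pointwise: "(\<phi> x - indicator A x)\<^sup>2 \<le> indicator ((U - C) \<inter> S) x" if "x \<in> space M" for x
  proof -
    have "x \<in> S" using that space_M by simp
    have "(\<phi> x - indicator A x)\<^sup>2 \<le> indicator (U - C) x"
    proof (rule power2_diff_indicator_le)
      show "\<phi> x \<in> {0..1}" by (fact \<phi>(2))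
      show "\<phi> x = 1 \<and> x \<in> A" if "x \<in> C" using that \<phi>(3) CU(4) \<open>x \<in> S\<close> by blast
      show "\<phi> x = 0 \<and> x \<notin> A" if "x \<notin> U" using that \<phi>(4) CU(5) by blast
    qed
    thus ?thesis using \<open>x \<in> S\<close> by (simp add: indicator_def)
  qed
  have "(\<integral>x. (\<phi> x - indicator A x)\<^sup>2 \<partial>M) \<le> (\<integral>x. indicator ((U - C) \<inter> S) x \<partial>M)"
  proof (rule integral_mono)
    show "integrable M (\<lambda>x. (\<phi> x - indicator A x)\<^sup>2)"
      using square_integrable_diff[OF \<phi>_si A_si] unfolding square_integrable_def by (rule conjunct2)
    have "emeasure M ((U - C) \<inter> S) < \<infinity>"
      by (simp add: less_top[symmetric])
    thus "integrable M (\<lambda>x. indicator ((U - C) \<inter> S) x :: real)"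
      by (rule integrable_real_indicator[OF D(1)])
  qed (rule pointwise)
  also have "\<dots> = measure M ((U - C) \<inter> S)"
    using space_M by (simp add: Int_absorb2)
  finally have "(\<integral>x. (\<phi> x - indicator A x)\<^sup>2 \<partial>M) < e"
    using D(2) by linarith
  thus "\<exists>g. L2_approximable g \<and> (\<integral>x. (g x - indicator A x)\<^sup>2 \<partial>M) < e"
    using L2_\<phi> by blast
qed

lemma L2_approximable_simple_function:
  assumes f: "simple_function M f"
  shows "L2_approximable f"
proof -
  interpret L2: function_subspace "Collect L2_approximable"
    by (rule function_subspace_L2_approximable)
  have "L2_approximable (\<lambda>x. y * indicator (f -` {y} \<inter> space M) x)" for y
    using L2.scale_mem[of "indicator (f -` {y} \<inter> space M)" y]
      L2_approximable_indicator[OF simple_functionD(2)[OF f]] by simp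
  hence "L2_approximable (\<lambda>x. \<Sum>y\<in>f ` space M. y * indicator (f -` {y} \<inter> space M) x)"
    using L2.sum_mem[OF simple_functionD(1)[OF f], of "\<lambda>y x. y * indicator (f -` {y} \<inter> space M) x"]
    by simp
  moreover have "(\<Sum>y\<in>f ` space M. y * indicator (f -` {y} \<inter> space M) x) = f x" if "x \<in> space M" for x
  proof -
    have "(\<Sum>y\<in>f ` space M. y * indicator (f -` {y} \<inter> space M) x)
        = (\<Sum>y\<in>f ` space M. indicator (f -` {y} \<inter> space M) x *\<^sub>R y)"
      by (intro sum.cong refl) (simp only: real_scaleR_def mult.commute)
    also have "\<dots> = f x"
      by (rule simple_function_indicator_representation_banach[OF f that, symmetric])
    finally show ?thesis .
  qed
  ultimately show ?thesis
    by (rule L2_approximable_cong)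
qed

lemma L2_approximable_all:
  assumes f: "square_integrable M f"
  shows "L2_approximable f"
proof (rule L2_approximable_limit[OF f])
  fix e :: real assume "0 < e"
  then obtain s where "simple_function M s" "(\<integral>x. (s x - f x)\<^sup>2 \<partial>M) < e"
    by (rule simple_function_L2_approx[OF f])
  thus "\<exists>g. L2_approximable g \<and> (\<integral>x. (g x - f x)\<^sup>2 \<partial>M) < e"
    using L2_approximable_simple_function by blast
qed

theorem L2_dense:
  "square_integrable M f \<Longrightarrow> 0 < e \<Longrightarrow> \<exists>q\<in>Q. (\<integral>x. (q x - f x)\<^sup>2 \<partial>M) < e"
  by (rule L2_approximableD[OF L2_approximable_all])

end

lemma sum_lessThan_add: "(\<Sum>j<m + n. f j) = (\<Sum>j<m. f j) + (\<Sum>j<n. f (m + j))"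
  for m n :: nat
  by (induction n) (simp_all add: add.assoc)

lemma Qfam_iff:
  "q \<in> Qfam N \<longleftrightarrow> (\<exists>(ns::nat) (zs::nat \<Rightarrow> nat \<Rightarrow> complex) (a::nat \<Rightarrow> real) c \<alpha>.
      (\<forall>j<ns. zs j \<in> unit_sphere N \<and> 0 < a j \<and> 0 \<le> c j \<and> c j \<le> 1) \<and>
      q = (\<lambda>x. \<Sum>j<ns. \<alpha> j * sigmoid (a j * ((cmod (hinner N x (zs j)))\<^sup>2 - c j))))"
  unfolding Qfam_def by blast

lemma QfamI:
  fixes ns :: nat
  assumes "\<forall>j<ns. zs j \<in> unit_sphere N \<and> 0 < a j \<and> 0 \<le> c j \<and> c j \<le> 1"
  shows "(\<lambda>x. \<Sum>j<ns. \<alpha> j * sigmoid (a j * ((cmod (hinner N x (zs j)))\<^sup>2 - c j))) \<in> Qfam N"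
  unfolding Qfam_iff by (intro exI) (rule conjI[OF assms refl])

lemma QfamE:
  assumes "q \<in> Qfam N"
  obtains ns :: nat and zs :: "nat \<Rightarrow> nat \<Rightarrow> complex" and a c \<alpha> :: "nat \<Rightarrow> real"
  where "\<forall>j<ns. zs j \<in> unit_sphere N \<and> 0 < a j \<and> 0 \<le> c j \<and> c j \<le> 1"
    and "q = (\<lambda>x. \<Sum>j<ns. \<alpha> j * sigmoid (a j * ((cmod (hinner N x (zs j)))\<^sup>2 - c j)))"
  using assms unfolding Qfam_iff by blast

lemma Qfam_add:
  assumes "p \<in> Qfam N" "q \<in> Qfam N"
  shows "(\<lambda>x. p x + q x) \<in> Qfam N"
proof -
  obtain n1 :: nat and z1 a1 c1 \<alpha>1 where par1: "\<forall>j<n1. z1 j \<in> unit_sphere N \<and> 0 < a1 j \<and> 0 \<le> c1 j \<and> c1 j \<le> 1"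
    and p: "p = (\<lambda>x. \<Sum>j<n1. \<alpha>1 j * sigmoid (a1 j * ((cmod (hinner N x (z1 j)))\<^sup>2 - c1 j)))"
    using assms(1) by (rule QfamE)
  obtain n2 :: nat and z2 a2 c2 \<alpha>2 where par2: "\<forall>j<n2. z2 j \<in> unit_sphere N \<and> 0 < a2 j \<and> 0 \<le> c2 j \<and> c2 j \<le> 1"
    and q: "q = (\<lambda>x. \<Sum>j<n2. \<alpha>2 j * sigmoid (a2 j * ((cmod (hinner N x (z2 j)))\<^sup>2 - c2 j)))"
    using assms(2) by (rule QfamE)
  define P where "P j = (if j < n1 then (z1 j, a1 j, c1 j, \<alpha>1 j)
    else (z2 (j - n1), a2 (j - n1), c2 (j - n1), \<alpha>2 (j - n1)))" for j
  let ?z = "\<lambda>j. fst (P j)" and ?a = "\<lambda>j. fst (snd (P j))"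
    and ?c = "\<lambda>j. fst (snd (snd (P j)))" and ?\<alpha> = "\<lambda>j. snd (snd (snd (P j)))"
  have "(\<lambda>x. p x + q x) = (\<lambda>x. \<Sum>j<n1 + n2. ?\<alpha> j * sigmoid (?a j * ((cmod (hinner N x (?z j)))\<^sup>2 - ?c j)))"
    unfolding p q sum_lessThan_add by (auto simp: P_def intro!: sum.cong)
  moreover have "\<forall>j<n1 + n2. ?z j \<in> unit_sphere N \<and> 0 < ?a j \<and> 0 \<le> ?c j \<and> ?c j \<le> 1"
    using par1 par2 by (auto simp: P_def)
  ultimately show ?thesis by (simp only: QfamI)
qed

lemma function_subspace_Qfam: "function_subspace (Qfam N)"
proof
  show "(\<lambda>x. 0) \<in> Qfam N"
    unfolding Qfam_iff by (rule exI[of _ 0]) simp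
  show "(\<lambda>x. r * q x) \<in> Qfam N" if q: "q \<in> Qfam N" for q r
  proof -
    obtain ns :: nat and zs a c \<alpha> where "\<forall>j<ns. zs j \<in> unit_sphere N \<and> 0 < a j \<and> 0 \<le> c j \<and> c j \<le> 1"
      and "q = (\<lambda>x. \<Sum>j<ns. \<alpha> j * sigmoid (a j * ((cmod (hinner N x (zs j)))\<^sup>2 - c j)))"
      using q by (rule QfamE)
    thus ?thesis
      using QfamI[of ns zs N a c "\<lambda>j. r * \<alpha> j"] by (simp add: sum_distrib_left mult.assoc)
  qed
qed (rule Qfam_add)

lemma continuous_on_Qfam: "q \<in> Qfam N \<Longrightarrow> continuous_on UNIV q"
  by (erule QfamE) (simp add: hinner_def continuous_intros)

lemma Qfam_bounded:
  assumes "q \<in> Qfam N"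
  shows "\<exists>B. \<forall>x. \<bar>q x\<bar> \<le> B"
proof -
  obtain ns :: nat and zs a c \<alpha>
    where q: "q = (\<lambda>x. \<Sum>j<ns. \<alpha> j * sigmoid (a j * ((cmod (hinner N x (zs j)))\<^sup>2 - c j)))"
    using assms by (rule QfamE)
  have "\<bar>sigmoid t\<bar> \<le> 1" for t
    using sigmoid_pos[of t] sigmoid_less_1[of t] by simp
  hence "\<bar>q x\<bar> \<le> (\<Sum>j<ns. \<bar>\<alpha> j\<bar>)" for x
    unfolding q by (intro order_trans[OF sum_abs sum_mono]) (simp add: abs_mult mult_left_le)
  thus ?thesis by blast
qed

lemma comp_overlap_in_uniform_closure:
  assumes z: "z \<in> unit_sphere N"
    and overlap: "\<And>x. x \<in> K \<Longrightarrow> (cmod (hinner N x z))\<^sup>2 \<in> {0..1}"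
    and g: "continuous_on {0..1} g"
  shows "(\<lambda>x. g ((cmod (hinner N x z))\<^sup>2)) \<in> uniform_closure_on K (Qfam N)"
  unfolding uniform_closure_on_def
proof (intro CollectI allI impI)
  fix e :: real assume "0 < e"
  then obtain ns :: nat and a c \<alpha> where par: "\<forall>j<ns. 0 < a j \<and> 0 \<le> c j \<and> c j \<le> 1"
    and approx: "\<forall>t\<in>{0..1}. \<bar>g t - (\<Sum>j<ns. \<alpha> j * sigmoid (a j * (t - c j)))\<bar> < e"
    using sigmoid_sum_approx[OF g] by blast
  have "(\<lambda>x. \<Sum>j<ns. \<alpha> j * sigmoid (a j * ((cmod (hinner N x z))\<^sup>2 - c j))) \<in> Qfam N"
    using QfamI[of ns "\<lambda>_. z"] par z by simp
  thus "\<exists>q\<in>Qfam N. \<forall>x\<in>K. \<bar>g ((cmod (hinner N x z))\<^sup>2) - q x\<bar> < e"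
    using approx overlap by (intro bexI) auto
qed

section \<open>Even polynomials on a real spherical cap\<close>

lemma continuous_on_coordinate [continuous_intros]: "continuous_on S (\<lambda>x. x i)"
  by (rule continuous_on_subset[OF continuous_on_product_coordinates]) simp

definition real_cap :: "nat \<Rightarrow> nat \<Rightarrow> real \<Rightarrow> (nat \<Rightarrow> complex) set" where
  "real_cap N d \<delta> = {x. (\<forall>i. Im (x i) = 0) \<and> (\<forall>i. N \<le> i \<longrightarrow> x i = 0) \<and>
      (\<Sum>i<N. (cmod (x i))\<^sup>2) \<le> 1 \<and> \<delta> \<le> Re (x d)}"

lemma real_cap_mono: "\<delta> \<le> \<delta>' \<Longrightarrow> real_cap N d \<delta>' \<subseteq> real_cap N d \<delta>"
  unfolding real_cap_def by auto

lemma real_cap_coordinate_real: "x \<in> real_cap N d \<delta> \<Longrightarrow> x i = complex_of_real (Re (x i))"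
  unfolding real_cap_def by (simp add: complex_eq_iff)

lemma compact_real_cap: "compact (real_cap N d \<delta>)"
proof -
  have "compact (PiE UNIV (\<lambda>_::nat. cball (0::complex) 1))"
    using compactin_PiE[of "\<lambda>_. euclidean" UNIV "\<lambda>_. cball (0::complex) 1"]
    by (simp add: euclidean_product_topology compact_cball)
  moreover have "closed (real_cap N d \<delta>)"
    unfolding real_cap_def
    by (intro closed_Collect_conj closed_Collect_all closed_Collect_imp open_Collect_const
        closed_Collect_eq closed_Collect_le continuous_intros)
  moreover have "real_cap N d \<delta> \<subseteq> PiE UNIV (\<lambda>_::nat. cball (0::complex) 1)"
  proof (safe intro!: PiE_I)
    fix x i assume x: "x \<in> real_cap N d \<delta>"
    show "x i \<in> cball 0 1"
    proof (cases "i < N")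
      case True
      hence "(cmod (x i))\<^sup>2 \<le> (\<Sum>i<N. (cmod (x i))\<^sup>2)"
        by (intro member_le_sum) auto
      also have "\<dots> \<le> 1" using x unfolding real_cap_def by simp
      finally show ?thesis using power2_le_imp_le[of "cmod (x i)" 1] by simp
    qed (use x in \<open>simp add: real_cap_def\<close>)
  qed simp
  ultimately show ?thesis
    by (metis compact_Int_closed inf.absorb_iff2)
qed

lemma norm_hinner_le_1:
  assumes "(\<Sum>i<N. (cmod (x i))\<^sup>2) \<le> 1" "(\<Sum>i<N. (cmod (z i))\<^sup>2) \<le> 1"
  shows "cmod (hinner N x z) \<le> 1"
proof -
  have "cmod (hinner N x z) \<le> (\<Sum>i<N. cmod (cnj (x i) * z i))"
    unfolding hinner_def by (rule norm_sum)
  also have "\<dots> = (\<Sum>i<N. cmod (x i) * cmod (z i))"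
    by (simp add: norm_mult)
  also have "\<dots> \<le> (\<Sum>i<N. ((cmod (x i))\<^sup>2 + (cmod (z i))\<^sup>2) / 2)"
  proof (intro sum_mono)
    fix i
    show "cmod (x i) * cmod (z i) \<le> ((cmod (x i))\<^sup>2 + (cmod (z i))\<^sup>2) / 2"
      using sum_squares_bound[of "cmod (x i)" "cmod (z i)"] by simp
  qed
  also have "\<dots> \<le> 1"
    using assms by (simp add: sum.distrib sum_divide_distrib[symmetric])
  finally show ?thesis .
qed

lemma overlap_real_cap:
  "x \<in> real_cap N d \<delta> \<Longrightarrow> z \<in> unit_sphere N \<Longrightarrow> (cmod (hinner N x z))\<^sup>2 \<in> {0..1}"
  using norm_hinner_le_1[of x N z]
  by (simp add: real_cap_def unit_sphere_def power_le_one)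

lemma unit_sphere_nonempty:
  assumes "0 < N" obtains z where "z \<in> unit_sphere N"
proof
  show "(\<lambda>i. if i = 0 then 1 else 0) \<in> unit_sphere N"
    using assms by (simp add: unit_sphere_def if_distrib[of "\<lambda>z. (cmod z)\<^sup>2"] cong: if_cong)
qed

lemma const_in_uniform_closure:
  assumes "0 < N"
  shows "(\<lambda>x. r) \<in> uniform_closure_on (real_cap N d \<delta>) (Qfam N)"
proof -
  obtain z where "z \<in> unit_sphere N" using unit_sphere_nonempty[OF assms] .
  from comp_overlap_in_uniform_closure[OF this overlap_real_cap[OF _ this], where g = "\<lambda>_. r"]
  show ?thesis by simp
qed

lemma linear_form_power_in_uniform_closure:
  assumes "0 < N"
  shows "(\<lambda>x. (\<Sum>j<N. Re (x j) * v j) ^ (2 * k)) \<in> uniform_closure_on (real_cap N d \<delta>) (Qfam N)"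
proof (cases "\<forall>j<N. v j = 0")
  case True
  thus ?thesis using const_in_uniform_closure[OF assms, of "0 ^ (2 * k)"] by simp
next
  case False
  then obtain i where "i < N" "v i \<noteq> 0" by auto
  hence "0 < (\<Sum>j<N. (v j)\<^sup>2)"
    by (intro sum_pos2[where i = i]) auto
  define s where "s = sqrt (\<Sum>j<N. (v j)\<^sup>2)"
  have "0 < s" and s2: "s\<^sup>2 = (\<Sum>j<N. (v j)\<^sup>2)"
    unfolding s_def using \<open>0 < (\<Sum>j<N. (v j)\<^sup>2)\<close> by simp_all
  define z where "z j = (if j < N then complex_of_real (v j / s) else 0)" for j
  have "(\<Sum>j<N. (cmod (z j))\<^sup>2) = (\<Sum>j<N. (v j)\<^sup>2) / s\<^sup>2"
    unfolding z_def by (simp add: power_divide sum_divide_distrib del: of_real_divide)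
  hence z_unit: "z \<in> unit_sphere N"
    unfolding unit_sphere_def using s2 \<open>0 < s\<close> \<open>0 < (\<Sum>j<N. (v j)\<^sup>2)\<close> by (simp add: z_def)
  have "(\<lambda>x. s ^ (2 * k) * ((cmod (hinner N x z))\<^sup>2) ^ k) \<in> uniform_closure_on (real_cap N d \<delta>) (Qfam N)"
    by (intro comp_overlap_in_uniform_closure[OF z_unit] continuous_intros)
      (rule overlap_real_cap[OF _ z_unit])
  moreover have "s ^ (2 * k) * ((cmod (hinner N x z))\<^sup>2) ^ k = (\<Sum>j<N. Re (x j) * v j) ^ (2 * k)"
    if "x \<in> real_cap N d \<delta>" for x
  proof -
    have "hinner N x z = complex_of_real ((\<Sum>j<N. Re (x j) * v j) / s)"
      unfolding hinner_def z_def
      by (subst real_cap_coordinate_real[OF that]) (simp add: sum_divide_distrib)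
    hence "(cmod (hinner N x z))\<^sup>2 = ((\<Sum>j<N. Re (x j) * v j) / s)\<^sup>2"
      by (simp only: norm_of_real power2_abs)
    thus ?thesis
      using \<open>0 < s\<close> by (simp add: power_mult[symmetric] power_mult_distrib[symmetric])
  qed
  ultimately show ?thesis
    by (rule uniform_closure_on_cong)
qed

lemma even_monomial_in_uniform_closure:
  assumes "0 < N" "set js \<subseteq> {..<N}" "even (length js)"
  shows "(\<lambda>x. \<Prod>i\<leftarrow>js. Re (x i)) \<in> uniform_closure_on (real_cap N d \<delta>) (Qfam N)"
proof -
  interpret U: function_subspace "uniform_closure_on (real_cap N d \<delta>) (Qfam N)"
    using function_subspace_Qfam by (rule function_subspace.function_subspace_uniform_closure_on)
  define m where "m = length js"
  define v where "v S j = real (card {k \<in> S. js ! k = j})" for S j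
  have partial_sum: "(\<Sum>k\<in>S. Re (x (js ! k))) = (\<Sum>j<N. Re (x j) * v S j)" if "S \<in> Pow {..<m}" for S x
  proof -
    have "(\<Sum>k\<in>S. Re (x (js ! k))) = (\<Sum>j<N. \<Sum>k\<in>{k \<in> S. js ! k = j}. Re (x (js ! k)))"
      using that assms(2) finite_subset[of S "{..<m}"]
      by (intro sum.group[symmetric]) (auto simp: m_def dest!: nth_mem)
    also have "\<dots> = (\<Sum>j<N. Re (x j) * v S j)"
      unfolding v_def by (intro sum.cong refl) simp
    finally show ?thesis .
  qed
  have "fact m * (\<Prod>i\<leftarrow>js. Re (x i)) = (\<Sum>S\<in>Pow {..<m}. (-1) ^ (m - card S) * (\<Sum>j<N. Re (x j) * v S j) ^ m)"
    for x
  proof -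
    have "(\<Prod>i\<leftarrow>js. Re (x i)) = (\<Prod>k<m. Re (x (js ! k)))"
      unfolding m_def prod.list_conv_set_nth by (simp add: atLeast0LessThan)
    also have "fact m * \<dots> = (\<Sum>S\<in>Pow {..<m}. (-1) ^ (m - card S) * (\<Sum>k\<in>S. Re (x (js ! k))) ^ m)"
      using alternating_sum_Pow_power[of "{..<m}" m 0 "\<lambda>k. Re (x (js ! k))"] by simp
    also have "\<dots> = (\<Sum>S\<in>Pow {..<m}. (-1) ^ (m - card S) * (\<Sum>j<N. Re (x j) * v S j) ^ m)"
      by (intro sum.cong refl) (simp add: partial_sum)
    finally show ?thesis .
  qed
  hence "(\<Prod>i\<leftarrow>js. Re (x i)) = (\<Sum>S\<in>Pow {..<m}. ((-1) ^ (m - card S) / fact m) * (\<Sum>j<N. Re (x j) * v S j) ^ m)"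
    for x
    by (simp add: sum_divide_distrib[symmetric] field_simps)
  moreover have "(\<lambda>x. \<Sum>S\<in>Pow {..<m}. ((-1) ^ (m - card S) / fact m) * (\<Sum>j<N. Re (x j) * v S j) ^ m)
      \<in> uniform_closure_on (real_cap N d \<delta>) (Qfam N)"
    using linear_form_power_in_uniform_closure[OF assms(1)] assms(3)
    by (intro U.sum_mem U.scale_mem) (auto simp: m_def elim!: evenE)
  ultimately show ?thesis by simp
qed

text \<open>Only monomials of even degree are approximable by \<open>Qfam\<close>, since every
  \<open>|\<langle>x|z\<rangle>|\<^sup>2\<close> is quadratic in \<open>x\<close>.\<close>

inductive_set even_poly :: "nat \<Rightarrow> ((nat \<Rightarrow> complex) \<Rightarrow> real) set" for N :: nat where
  monomial: "set js \<subseteq> {..<N} \<Longrightarrow> even (length js) \<Longrightarrow> (\<lambda>x. \<Prod>i\<leftarrow>js. Re (x i)) \<in> even_poly N"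
| add: "f \<in> even_poly N \<Longrightarrow> g \<in> even_poly N \<Longrightarrow> (\<lambda>x. f x + g x) \<in> even_poly N"
| scale: "f \<in> even_poly N \<Longrightarrow> (\<lambda>x. r * f x) \<in> even_poly N"

lemma even_poly_const: "(\<lambda>x. c) \<in> even_poly N"
  using even_poly.scale[OF even_poly.monomial[of "[]"], where r = c] by simp

lemma even_poly_mult:
  assumes "f \<in> even_poly N" "g \<in> even_poly N"
  shows "(\<lambda>x. f x * g x) \<in> even_poly N"
  using assms
proof (induction f rule: even_poly.induct)
  case (monomial js)
  note js = monomial.hyps
  from monomial.prems show ?case
  proof (induction g rule: even_poly.induct)
    case (monomial ks)
    thus ?case using even_poly.monomial[of "js @ ks"] js by simp
  next
    case (add g1 g2)
    thus ?case using even_poly.add[OF add.IH] by (simp add: algebra_simps)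
  next
    case (scale g r)
    thus ?case using even_poly.scale[OF scale.IH, where r = r] by (simp add: algebra_simps)
  qed
next
  case (add f1 f2)
  thus ?case using even_poly.add[OF add.IH[OF add.prems]] by (simp add: algebra_simps)
next
  case (scale f r)
  thus ?case using even_poly.scale[OF scale.IH[OF scale.prems], of r] by (simp add: algebra_simps)
qed

lemma continuous_on_even_poly: "f \<in> even_poly N \<Longrightarrow> continuous_on S f"
proof (induction rule: even_poly.induct)
  case (monomial js)
  show ?case by (induction js) (auto intro!: continuous_intros)
qed (auto intro!: continuous_intros)

lemma even_poly_in_uniform_closure:
  "f \<in> even_poly N \<Longrightarrow> 0 < N \<Longrightarrow> f \<in> uniform_closure_on (real_cap N d \<delta>) (Qfam N)"
proof (induction rule: even_poly.induct)
  case (monomial js)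
  thus ?case by (intro even_monomial_in_uniform_closure)
next
  case (add f g)
  thus ?case using function_subspace.add_mem[OF function_subspace.function_subspace_uniform_closure_on[OF function_subspace_Qfam]] by blast
next
  case (scale f r)
  thus ?case using function_subspace.scale_mem[OF function_subspace.function_subspace_uniform_closure_on[OF function_subspace_Qfam]] by blast
qed

text \<open>Even polynomials cannot separate \<open>x\<close> from \<open>-x\<close>; the lower bound on coordinate \<open>d\<close>
  excludes such pairs.\<close>

lemma even_poly_separates_real_cap:
  assumes "d < N" "0 < \<delta>" and x: "x \<in> real_cap N d \<delta>" and y: "y \<in> real_cap N d \<delta>" and "x \<noteq> y"
  obtains f where "f \<in> even_poly N" "f x \<noteq> f y"
proof -
  obtain i where "x i \<noteq> y i" using \<open>x \<noteq> y\<close> by auto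
  hence "Re (x i) \<noteq> Re (y i)"
    using x y unfolding real_cap_def by (auto simp: complex_eq_iff)
  have "i < N"
  proof (rule ccontr)
    assume "\<not> i < N"
    thus False using x y \<open>x i \<noteq> y i\<close> unfolding real_cap_def by auto
  qed
  have pos: "0 < Re (x d)" "0 < Re (y d)"
    using x y \<open>0 < \<delta>\<close> unfolding real_cap_def by auto
  show ?thesis
  proof (cases "Re (x d) = Re (y d)")
    case True
    have "(\<lambda>x. \<Prod>j\<leftarrow>[i, d]. Re (x j)) \<in> even_poly N"
      using \<open>i < N\<close> \<open>d < N\<close> by (intro even_poly.monomial) auto
    moreover have "Re (x i) * Re (x d) \<noteq> Re (y i) * Re (y d)"
      using True pos \<open>Re (x i) \<noteq> Re (y i)\<close> by simp
    ultimately show ?thesis by (intro that) auto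
  next
    case False
    have "(\<lambda>x. \<Prod>j\<leftarrow>[d, d]. Re (x j)) \<in> even_poly N"
      using \<open>d < N\<close> by (intro even_poly.monomial) auto
    moreover have "(Re (x d))\<^sup>2 \<noteq> (Re (y d))\<^sup>2"
      using False pos by (simp add: power2_eq_iff_nonneg)
    ultimately show ?thesis by (intro that) (auto simp: power2_eq_square)
  qed
qed

lemma continuous_in_uniform_closure_real_cap:
  assumes "d < N" "0 < \<delta>" "continuous_on (real_cap N d \<delta>) \<phi>"
  shows "\<phi> \<in> uniform_closure_on (real_cap N d \<delta>) (Qfam N)"
proof (rule uniform_closure_on_limit)
  fix e :: real assume "0 < e"
  have "\<exists>g. g \<in> even_poly N \<and> (\<forall>x \<in> real_cap N d \<delta>. \<bar>\<phi> x - g x\<bar> < e)"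
  proof (rule Stone_Weierstrass_HOL[where P = "\<lambda>f. f \<in> even_poly N"])
    show "\<exists>f. f \<in> even_poly N \<and> f x \<noteq> f y"
      if "x \<in> real_cap N d \<delta> \<and> y \<in> real_cap N d \<delta> \<and> x \<noteq> y" for x y
      using even_poly_separates_real_cap[OF assms(1,2)] that by metis
  qed (use compact_real_cap even_poly_const continuous_on_even_poly even_poly.add even_poly_mult
      assms(3) \<open>0 < e\<close> in auto)
  thus "\<exists>g\<in>uniform_closure_on (real_cap N d \<delta>) (Qfam N). \<forall>x\<in>real_cap N d \<delta>. \<bar>\<phi> x - g x\<bar> < e"
    using even_poly_in_uniform_closure assms(1) by fastforce
qed

lemma L2_uniform_density_Qfam:
  assumes "finite_measure M" "sets M = sets (restrict_space borel S)"
    and "S \<subseteq> real_cap N d \<delta>" "d < N" "0 < \<delta>"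
  shows "L2_uniform_density M (Qfam N) S"
proof (intro L2_uniform_density.intro L2_uniform_density_axioms.intro assms(1,2) function_subspace_Qfam)
  show "q \<in> borel_measurable borel" if "q \<in> Qfam N" for q
    using continuous_on_Qfam[OF that] by (rule borel_measurable_continuous_onI)
  show "\<exists>B. \<forall>x. \<bar>q x\<bar> \<le> B" if "q \<in> Qfam N" for q
    by (rule Qfam_bounded[OF that])
  show "\<phi> \<in> uniform_closure_on S (Qfam N)" if "continuous_on UNIV \<phi>" for \<phi>
    using continuous_in_uniform_closure_real_cap[OF assms(4,5) continuous_on_subset[OF that]]
      uniform_closure_on_subset[OF assms(3)] by blast
qed

section \<open>The amplitude encoding\<close>

lemma amp_enc_extra_coordinate_bound:
  fixes r :: real
  assumes "0 < r"
  shows "1 / (2 + r) \<le> (r / (1 + r)) / sqrt (r\<^sup>2 + (r / (1 + r))\<^sup>2)"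
proof -
  define xt where "xt = r / (1 + r)"
  have "0 < xt" unfolding xt_def using assms by simp
  have "xt * (1 + r) = r"
    unfolding xt_def using assms by simp
  hence "r\<^sup>2 + xt\<^sup>2 = (xt * (1 + r))\<^sup>2 + xt\<^sup>2"
    by simp
  also have "\<dots> = xt\<^sup>2 * ((1 + r)\<^sup>2 + 1)"
    by (simp add: power2_eq_square algebra_simps)
  also have "\<dots> \<le> ((2 + r) * xt)\<^sup>2"
    using assms by (simp add: power_mult_distrib mult_left_mono power2_eq_square field_simps)
  finally have "sqrt (r\<^sup>2 + xt\<^sup>2) \<le> sqrt (((2 + r) * xt)\<^sup>2)"
    by (rule real_sqrt_le_mono)
  also have "\<dots> = (2 + r) * xt"
    using assms \<open>0 < xt\<close> by simp
  finally show ?thesis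
    using assms \<open>0 < xt\<close> unfolding xt_def[symmetric] by (simp add: field_simps add_pos_nonneg)
qed

lemma amp_enc_in_real_cap:
  assumes "d < N" "0 < vnorm d x"
  shows "amp_enc d x \<in> real_cap N d (1 / (2 + vnorm d x))"
proof -
  define r where "r = vnorm d x"
  define xt where "xt = r / (1 + r)"
  define \<gamma> where "\<gamma> = sqrt (r\<^sup>2 + xt\<^sup>2)"
  have "0 < r" using assms(2) unfolding r_def .
  have r2: "r\<^sup>2 = (\<Sum>i<d. (x i)\<^sup>2)"
    unfolding r_def vnorm_def by (simp add: sum_nonneg)
  have enc: "amp_enc d x = (\<lambda>i. if i < d then complex_of_real (x i / \<gamma>)
      else if i = d then complex_of_real (xt / \<gamma>) else 0)"
    unfolding amp_enc_def Let_def r_def xt_def \<gamma>_def ..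
  have "(\<Sum>i<N. (cmod (amp_enc d x i))\<^sup>2) = (\<Sum>i<Suc d. (cmod (amp_enc d x i))\<^sup>2)"
    using assms(1) by (intro sum.mono_neutral_right) (auto simp: enc)
  also have "\<dots> = (r\<^sup>2 + xt\<^sup>2) / \<gamma>\<^sup>2"
    by (simp add: enc r2 power_divide sum_divide_distrib add_divide_distrib del: of_real_divide)
  also have "\<dots> = 1"
    using \<open>0 < r\<close> unfolding \<gamma>_def by (simp add: add_pos_nonneg)
  finally have "(\<Sum>i<N. (cmod (amp_enc d x i))\<^sup>2) = 1" .
  thus ?thesis
    using amp_enc_extra_coordinate_bound[OF \<open>0 < r\<close>] assms(1)
    unfolding real_cap_def r_def[symmetric] xt_def[symmetric] \<gamma>_def[symmetric] by (auto simp: enc)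
qed

theorem theorem1:
  fixes d n :: nat and \<kappa>1 \<kappa>2 :: real
    and G :: "(nat \<Rightarrow> real) set"
    and \<mu> :: "(nat \<Rightarrow> complex) measure"
    and f :: "(nat \<Rightarrow> complex) \<Rightarrow> real"
    and \<epsilon> :: real
  assumes "0 < d" and "0 < n" and "d + 1 \<le> 2 ^ n"
    and "0 < \<kappa>1" and "\<kappa>1 \<le> \<kappa>2"
    and "\<forall>x\<in>G. \<forall>i\<ge>d. x i = 0"
    and "\<forall>x\<in>G. \<kappa>1 \<le> vnorm d x \<and> vnorm d x \<le> \<kappa>2"
    and "finite_measure \<mu>"
    and "sets \<mu> = sets (restrict_space borel (amp_enc d ` G))"
    and "f \<in> borel_measurable \<mu>"
    and "integrable \<mu> (\<lambda>x. (f x)\<^sup>2)"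
    and "0 < \<epsilon>"
  shows "\<exists>q\<in>Qfam (2 ^ n). (\<integral>x. (q x - f x)\<^sup>2 \<partial>\<mu>) < \<epsilon>"
proof -
  have "d < 2 ^ n" using assms(3) by simp
  have "amp_enc d x \<in> real_cap (2 ^ n) d (1 / (2 + \<kappa>2))" if "x \<in> G" for x
  proof -
    have "\<kappa>1 \<le> vnorm d x" "vnorm d x \<le> \<kappa>2" using assms(7) that by auto
    hence "amp_enc d x \<in> real_cap (2 ^ n) d (1 / (2 + vnorm d x))"
      using amp_enc_in_real_cap[OF \<open>d < 2 ^ n\<close>] assms(4) by simp
    moreover have "1 / (2 + \<kappa>2) \<le> 1 / (2 + vnorm d x)"
      using \<open>vnorm d x \<le> \<kappa>2\<close> \<open>\<kappa>1 \<le> vnorm d x\<close> assms(4) by (simp add: frac_le)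
    ultimately show ?thesis using real_cap_mono by blast
  qed
  hence "amp_enc d ` G \<subseteq> real_cap (2 ^ n) d (1 / (2 + \<kappa>2))" by blast
  moreover have "0 < 1 / (2 + \<kappa>2)" using assms(4,5) by simp
  ultimately interpret L2_uniform_density \<mu> "Qfam (2 ^ n)" "amp_enc d ` G"
    using L2_uniform_density_Qfam[OF assms(8,9) _ \<open>d < 2 ^ n\<close>] by blast
  show ?thesis
    using L2_dense[OF _ assms(12)] assms(10,11) unfolding square_integrable_def by blast
qed

end
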